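(* Let $\gamma$ be a gauge on $\mathbb{R}^d$ and $v\in\mathrm{SD}_\gamma$. Let $A\subset\mathbb{R}^d$ be a finite set with positive weights $w_a$, $a\in A$, and suppose all points of $A$ lie on a line parallel to $v$. Then the Fermat–Weber problem of minimizing $\sum_{a\in A}w_a\gamma(x-a)$ over $x\in\mathbb{R}^d$ has a minimizer lying on that line.
   Context: A gauge $\gamma$ on $\mathbb{R}^d$ is the Minkowski functional of a convex compact set $B_\gamma$ having the origin in its interior (not necessarily symmetric). Its skewness is $\sigma=\sup_{x\neq0}\gamma(x)/\gamma(-x)$ and the set of skewness directions is $\mathrm{SD}_\gamma=\{v:\gamma(v)=\sigma\gamma(-v)=1\}$. *)

theory Defs
  imports "HOL-Analysis.Analysis"
begin

definition gauge_body :: "'a::euclidean_space set \<Rightarrow> bool" where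
  "gauge_body B \<longleftrightarrow> convex B \<and> compact B \<and> 0 \<in> interior B"

definition minkowski_gauge :: "'a::euclidean_space set \<Rightarrow> 'a \<Rightarrow> real" where
  "minkowski_gauge B x = Inf {t. t > 0 \<and> x \<in> (\<lambda>y. t *\<^sub>R y) ` B}"

definition skewness :: "'a::euclidean_space set \<Rightarrow> real" where
  "skewness B = (SUP x\<in>UNIV - {0}. minkowski_gauge B x / minkowski_gauge B (- x))"

definition skewness_directions :: "'a::euclidean_space set \<Rightarrow> 'a set" where
  "skewness_directions B = {v. minkowski_gauge B v = 1 \<and>
                                skewness B * minkowski_gauge B (- v) = 1}"

end

theory Submission
  imports Defs
begin

text \<open>
  A point v with \<open>\<gamma>(v) = 1\<close> lies on the boundary of B, so a supporting hyperplane of B at v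
  yields a linear functional \<open>\<phi>\<close> with \<open>\<phi>(v) = 1\<close> and \<open>\<phi> \<le> \<gamma>\<close>. Together with
  \<open>\<gamma>(x) \<ge> \<gamma>(-x)/\<sigma> \<ge> -\<phi>(x)/\<sigma>\<close> this gives \<open>\<gamma>(x) \<ge> max \<phi>(x) (-\<phi>(x)/\<sigma>)\<close>, and for a
  skewness direction v this lower bound is attained on the line \<open>\<real>v\<close>:
  \<open>\<gamma>(r v) = max r (-r/\<sigma>)\<close>. Hence replacing a point y by \<open>p + \<phi>(y - p) v\<close> does not increase
  the Fermat--Weber objective, which reduces the problem to a one-dimensional one; there a
  weighted sum of translates of a continuous valley-shaped function attains its minimum
  between the leftmost and the rightmost translate.
\<close>

lemma gauge_body_ball_subset: "gauge_body B \<Longrightarrow> \<exists>d>0. ball 0 d \<subseteq> B"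
  unfolding gauge_body_def by (meson mem_interior)

lemma gauge_body_norm_bounded: "gauge_body B \<Longrightarrow> \<exists>R>0. \<forall>y\<in>B. norm y \<le> R"
  unfolding gauge_body_def by (meson bounded_pos compact_imp_bounded)

lemma minkowski_gauge_scaleR_le: "t > 0 \<Longrightarrow> y \<in> B \<Longrightarrow> minkowski_gauge B (t *\<^sub>R y) \<le> t"
  unfolding minkowski_gauge_def by (rule cInf_lower) (auto intro!: bdd_belowI[where m=0])

lemma scaleR_mem_image_of_ball_subset:
  assumes "ball 0 d \<subseteq> B" "d > 0" "norm x / d < t"
  shows "\<exists>y\<in>B. x = t *\<^sub>R y"
proof -
  have "0 \<le> norm x / d" using assms(2) by simp
  hence "t > 0" using assms(3) by linarith
  moreover have "norm x < t * d" using assms(2,3) by (simp add: divide_less_eq mult.commute)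
  ultimately have "x /\<^sub>R t \<in> B" using assms(1) by (auto simp: field_simps)
  with \<open>t > 0\<close> show ?thesis by (metis divideR_right less_irrefl)
qed

lemma minkowski_gauge_le_norm:
  assumes "ball 0 d \<subseteq> B" "d > 0"
  shows "minkowski_gauge B x \<le> norm x / d"
proof (rule dense_ge)
  fix t assume t: "norm x / d < t"
  have "0 \<le> norm x / d" using assms(2) by simp
  hence "t > 0" using t by linarith
  moreover obtain y where "y \<in> B" "x = t *\<^sub>R y"
    using scaleR_mem_image_of_ball_subset[OF assms t] by blast
  ultimately show "minkowski_gauge B x \<le> t" using minkowski_gauge_scaleR_le by blast
qed

lemma gauge_body_scales_nonempty:
  assumes "gauge_body B"
  shows "{t. t > 0 \<and> x \<in> (\<lambda>y. t *\<^sub>R y) ` B} \<noteq> {}"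
proof -
  obtain d where d: "d > 0" "ball 0 d \<subseteq> B" using gauge_body_ball_subset[OF assms] by blast
  define t where "t = norm x / d + 1"
  have "0 \<le> norm x / d" using d by simp
  hence "t > 0" "norm x / d < t" by (auto simp: t_def)
  with scaleR_mem_image_of_ball_subset[OF d(2,1)] show ?thesis by blast
qed

lemma minkowski_gauge_ge_homogeneous:
  assumes "gauge_body B" "b > 0" "\<forall>y\<in>B. f y \<le> b"
    and "\<And>t y. t > 0 \<Longrightarrow> f (t *\<^sub>R y) = t * f y"
  shows "f x / b \<le> minkowski_gauge B x"
  unfolding minkowski_gauge_def
proof (rule cInf_greatest)
  show "{t. t > 0 \<and> x \<in> (\<lambda>y. t *\<^sub>R y) ` B} \<noteq> {}" by (rule gauge_body_scales_nonempty[OF assms(1)])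
  fix t assume "t \<in> {t. t > 0 \<and> x \<in> (\<lambda>y. t *\<^sub>R y) ` B}"
  then obtain y where y: "t > 0" "y \<in> B" "x = t *\<^sub>R y" by auto
  have "f x = t * f y" using y assms(4) by simp
  also have "\<dots> \<le> t * b" using y assms(3) by (simp add: mult_left_mono)
  finally show "f x / b \<le> t" using assms(2) by (simp add: divide_le_eq)
qed

lemma minkowski_gauge_ge_norm:
  assumes "gauge_body B" "R > 0" "\<forall>y\<in>B. norm y \<le> R"
  shows "norm x / R \<le> minkowski_gauge B x"
  by (rule minkowski_gauge_ge_homogeneous[OF assms]) simp

lemma minkowski_gauge_nonneg:
  assumes "gauge_body B"
  shows "0 \<le> minkowski_gauge B x"
proof -
  obtain R where R: "R > 0" "\<forall>y\<in>B. norm y \<le> R" using gauge_body_norm_bounded[OF assms] by blast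
  have "0 \<le> norm x / R" using R by simp
  also have "\<dots> \<le> minkowski_gauge B x" by (rule minkowski_gauge_ge_norm[OF assms R])
  finally show ?thesis .
qed

lemma minkowski_gauge_pos:
  assumes "gauge_body B" "x \<noteq> 0"
  shows "0 < minkowski_gauge B x"
proof -
  obtain R where R: "R > 0" "\<forall>y\<in>B. norm y \<le> R" using gauge_body_norm_bounded[OF assms(1)] by blast
  have "0 < norm x / R" using R assms(2) by simp
  also have "\<dots> \<le> minkowski_gauge B x" by (rule minkowski_gauge_ge_norm[OF assms(1) R])
  finally show ?thesis .
qed

lemma minkowski_gauge_zero: "gauge_body B \<Longrightarrow> minkowski_gauge B 0 = 0"
  by (metis gauge_body_ball_subset minkowski_gauge_le_norm minkowski_gauge_nonneg
      norm_zero div_0 order_antisym)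

lemma minkowski_gauge_scaleR:
  assumes "gauge_body B" "c > 0"
  shows "minkowski_gauge B (c *\<^sub>R x) = c * minkowski_gauge B x"
proof -
  have le: "minkowski_gauge B (c *\<^sub>R x) \<le> c * minkowski_gauge B x" if "c > 0" for c x
  proof -
    have "minkowski_gauge B (c *\<^sub>R x) / c \<le> minkowski_gauge B x"
      unfolding minkowski_gauge_def[of B x]
    proof (rule cInf_greatest)
      show "{t. t > 0 \<and> x \<in> (\<lambda>y. t *\<^sub>R y) ` B} \<noteq> {}"
        by (rule gauge_body_scales_nonempty[OF assms(1)])
      fix t assume "t \<in> {t. t > 0 \<and> x \<in> (\<lambda>y. t *\<^sub>R y) ` B}"
      then obtain y where y: "t > 0" "y \<in> B" "x = t *\<^sub>R y" by auto
      have "minkowski_gauge B ((c * t) *\<^sub>R y) \<le> c * t"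
        using y(1,2) \<open>c > 0\<close> by (intro minkowski_gauge_scaleR_le) auto
      thus "minkowski_gauge B (c *\<^sub>R x) / c \<le> t"
        using y(3) \<open>c > 0\<close> by (simp add: divide_le_eq mult.commute)
    qed
    thus ?thesis using \<open>c > 0\<close> by (simp add: divide_le_eq mult.commute)
  qed
  have "minkowski_gauge B x = minkowski_gauge B (inverse c *\<^sub>R (c *\<^sub>R x))"
    using assms(2) by simp
  also have "\<dots> \<le> inverse c * minkowski_gauge B (c *\<^sub>R x)"
    by (rule le) (use assms(2) in simp)
  finally have "c * minkowski_gauge B x \<le> minkowski_gauge B (c *\<^sub>R x)"
    using assms(2) by (simp add: field_simps)
  with le[OF assms(2), of x] show ?thesis by linarith
qed

lemma bdd_above_minkowski_gauge_ratio:
  assumes "gauge_body B"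
  shows "bdd_above ((\<lambda>x. minkowski_gauge B x / minkowski_gauge B (- x)) ` (UNIV - {0}))"
proof -
  obtain d where d: "d > 0" "ball 0 d \<subseteq> B" using gauge_body_ball_subset[OF assms] by blast
  obtain R where R: "R > 0" "\<forall>y\<in>B. norm y \<le> R" using gauge_body_norm_bounded[OF assms] by blast
  show ?thesis
  proof (rule bdd_aboveI2)
    fix x :: 'a assume "x \<in> UNIV - {0}"
    hence pos: "norm x / R > 0" using R by simp
    have upper: "minkowski_gauge B x \<le> norm x / d" by (rule minkowski_gauge_le_norm[OF d(2,1)])
    have lower: "norm x / R \<le> minkowski_gauge B (- x)"
      using minkowski_gauge_ge_norm[OF assms R, of "- x"] by simp
    have "minkowski_gauge B x / minkowski_gauge B (- x) \<le> (norm x / d) / (norm x / R)"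
      by (rule frac_le[OF _ upper pos lower]) (use d(1) in simp)
    also have "\<dots> = R / d" using pos d R by (simp add: field_simps)
    finally show "minkowski_gauge B x / minkowski_gauge B (- x) \<le> R / d" .
  qed
qed

lemma minkowski_gauge_le_skewness:
  assumes "gauge_body B"
  shows "minkowski_gauge B x \<le> skewness B * minkowski_gauge B (- x)"
proof (cases "x = 0")
  case True
  thus ?thesis using minkowski_gauge_zero[OF assms] by simp
next
  case False
  have "minkowski_gauge B x / minkowski_gauge B (- x) \<le> skewness B"
    unfolding skewness_def
    by (rule cSUP_upper[OF _ bdd_above_minkowski_gauge_ratio[OF assms]]) (use False in simp)
  thus ?thesis using minkowski_gauge_pos[OF assms, of "- x"] False by (simp add: divide_le_eq)
qed

lemma skewness_directions_skewness_pos: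
  assumes "gauge_body B" "v \<in> skewness_directions B"
  shows "skewness B > 0"
proof (rule ccontr)
  assume "\<not> skewness B > 0"
  hence "skewness B * minkowski_gauge B (- v) \<le> 0"
    using minkowski_gauge_nonneg[OF assms(1)] by (simp add: mult_nonpos_nonneg)
  thus False using assms(2) by (simp add: skewness_directions_def)
qed

text \<open>Some multiple \<open>c v\<close> with \<open>c > 1\<close> still lies in B.\<close>

lemma minkowski_gauge_less_one_interior:
  assumes "v \<in> interior B"
  shows "minkowski_gauge B v < 1"
proof -
  obtain e where e: "e > 0" "ball v e \<subseteq> B" using assms by (meson mem_interior)
  define k where "k = norm v + 1"
  define c where "c = 1 + e / (2 * k)"
  have k: "k > 0" by (simp add: k_def add_nonneg_pos)
  hence c: "c > 1" using e by (simp add: c_def)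
  have "v - c *\<^sub>R v = (1 - c) *\<^sub>R v" by (simp add: algebra_simps)
  hence "norm (v - c *\<^sub>R v) = (c - 1) * norm v" using c by simp
  also have "\<dots> \<le> (c - 1) * k" using c by (simp add: k_def)
  also have "\<dots> = e / 2" using k by (simp add: c_def field_simps)
  also have "\<dots> < e" using e by simp
  finally have "c *\<^sub>R v \<in> B" using e by (auto simp: dist_norm)
  hence "minkowski_gauge B (inverse c *\<^sub>R (c *\<^sub>R v)) \<le> inverse c"
    using c by (intro minkowski_gauge_scaleR_le) auto
  hence "minkowski_gauge B v \<le> inverse c" using c by simp
  also have "\<dots> < 1" using c by (simp add: inverse_less_1_iff)
  finally show ?thesis .
qed

lemma supporting_functional_at_boundary:
  assumes "gauge_body B" "v \<notin> interior B"
  obtains a where "inner a v > 0" "\<forall>y\<in>B. inner a y \<le> inner a v"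
proof -
  have cvx: "convex B" and int0: "0 \<in> interior B" using assms(1) by (auto simp: gauge_body_def)
  obtain a b where ab: "a \<noteq> 0" "\<forall>x\<in>interior B. inner a x \<le> b" "b \<le> inner a v"
    using separating_hyperplane_sets[of "interior B" "{v}"] cvx int0 assms(2) by auto
  have "closure (interior B) \<subseteq> {y. inner a y \<le> b}"
    using ab(2) closed_halfspace_le by (intro closure_minimal) auto
  moreover have "closure (interior B) = closure B"
    using convex_closure_interior[OF cvx] int0 by auto
  ultimately have "B \<subseteq> {y. inner a y \<le> b}" using closure_subset by blast
  hence support: "\<forall>y\<in>B. inner a y \<le> inner a v" using ab(3) by auto
  obtain d where d: "d > 0" "ball 0 d \<subseteq> B" using gauge_body_ball_subset[OF assms(1)] by blast
  define y where "y = (d / (2 * norm a)) *\<^sub>R a"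
  have "norm y = d / 2" using ab(1) d by (simp add: y_def)
  hence "y \<in> B" using d by auto
  moreover have "inner a y > 0"
    using ab(1) d by (simp add: y_def zero_less_mult_iff)
  ultimately have "inner a v > 0" using support by fastforce
  thus ?thesis using that support by blast
qed

lemma minkowski_gauge_supporting_functional:
  assumes "gauge_body B" "minkowski_gauge B v = 1"
  obtains a where "inner a v = 1" "\<And>x. inner a x \<le> minkowski_gauge B x"
proof -
  have "v \<notin> interior B" using minkowski_gauge_less_one_interior assms(2) by force
  then obtain a where a: "inner a v > 0" "\<forall>y\<in>B. inner a y \<le> inner a v"
    using supporting_functional_at_boundary[OF assms(1)] by blast
  have "inner (a /\<^sub>R inner a v) x \<le> minkowski_gauge B x" for x
    using minkowski_gauge_ge_homogeneous[OF assms(1) a(1,2), of x]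
    by (simp add: field_class.field_divide_inverse mult.commute)
  moreover have "inner (a /\<^sub>R inner a v) v = 1" using a(1) by simp
  ultimately show ?thesis using that by blast
qed

text \<open>\<open>skewed_abs \<sigma> r\<close> is \<open>\<gamma>(r v)\<close> for a skewness direction v of a gauge with skewness \<open>\<sigma>\<close>.\<close>

definition skewed_abs :: "real \<Rightarrow> real \<Rightarrow> real" where
  "skewed_abs \<sigma> r = max r (- r / \<sigma>)"

lemma continuous_on_skewed_abs: "continuous_on S (skewed_abs \<sigma>)"
  unfolding skewed_abs_def divide_inverse by (intro continuous_intros)

lemma skewed_abs_of_nonneg:
  assumes "\<sigma> > 0" "0 \<le> r"
  shows "skewed_abs \<sigma> r = r"
  unfolding skewed_abs_def using assms divide_nonneg_pos[of r \<sigma>] by (intro max_absorb1) linarith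

lemma skewed_abs_of_nonpos:
  assumes "\<sigma> > 0" "r \<le> 0"
  shows "skewed_abs \<sigma> r = - r / \<sigma>"
  unfolding skewed_abs_def using assms divide_nonpos_pos[of r \<sigma>] by (intro max_absorb2) linarith

lemma skewed_abs_antimono_nonpos:
  assumes "\<sigma> > 0" "x \<le> y" "y \<le> 0"
  shows "skewed_abs \<sigma> y \<le> skewed_abs \<sigma> x"
  using assms skewed_abs_of_nonpos[OF assms(1)] by (simp add: divide_right_mono)

lemma skewed_abs_mono_nonneg:
  assumes "\<sigma> > 0" "0 \<le> x" "x \<le> y"
  shows "skewed_abs \<sigma> x \<le> skewed_abs \<sigma> y"
  using assms skewed_abs_of_nonneg[OF assms(1)] by simp

lemma minkowski_gauge_skewness_direction_line:
  assumes "gauge_body B" "v \<in> skewness_directions B"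
  shows "minkowski_gauge B (r *\<^sub>R v) = skewed_abs (skewness B) r"
proof -
  have \<sigma>: "skewness B > 0" by (rule skewness_directions_skewness_pos[OF assms])
  have v: "minkowski_gauge B v = 1" "minkowski_gauge B (- v) = 1 / skewness B"
    using assms(2) \<sigma> by (auto simp: skewness_directions_def field_simps)
  consider "r > 0" | "r = 0" | "r < 0" by fastforce
  thus ?thesis
  proof cases
    case 1
    thus ?thesis using minkowski_gauge_scaleR[OF assms(1) 1, of v] v skewed_abs_of_nonneg[OF \<sigma>]
      by simp
  next
    case 2
    thus ?thesis using minkowski_gauge_zero[OF assms(1)] by (simp add: skewed_abs_def)
  next
    case 3
    have "minkowski_gauge B ((- r) *\<^sub>R (- v)) = - r / skewness B"
      using minkowski_gauge_scaleR[OF assms(1), of "- r" "- v"] 3 v by simp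
    thus ?thesis using 3 skewed_abs_of_nonpos[OF \<sigma>] by simp
  qed
qed

lemma minkowski_gauge_ge_skewed_abs:
  assumes "gauge_body B" "skewness B > 0" "\<And>x. inner a x \<le> minkowski_gauge B x"
  shows "skewed_abs (skewness B) (inner a x) \<le> minkowski_gauge B x"
proof -
  have "- inner a x \<le> skewness B * minkowski_gauge B x"
    using assms(3)[of "- x"] minkowski_gauge_le_skewness[OF assms(1), of "- x"] by simp
  hence "- inner a x / skewness B \<le> minkowski_gauge B x"
    using assms(2) by (metis pos_divide_le_eq mult.commute)
  thus ?thesis using assms(3)[of x] by (simp add: skewed_abs_def)
qed

text \<open>
  Clamping a point into the interval spanned by the translates does not increase any term.
\<close>

lemma sum_translates_valley_attains_min:
  fixes f :: "real \<Rightarrow> real" and \<tau> :: "'b \<Rightarrow> real"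
  assumes "finite A" "\<forall>a\<in>A. w a \<ge> 0" "continuous_on UNIV f"
    and antimono: "\<And>x y. x \<le> y \<Longrightarrow> y \<le> 0 \<Longrightarrow> f y \<le> f x"
    and mono: "\<And>x y. 0 \<le> x \<Longrightarrow> x \<le> y \<Longrightarrow> f x \<le> f y"
  shows "\<exists>s. \<forall>s'. (\<Sum>a\<in>A. w a * f (s - \<tau> a)) \<le> (\<Sum>a\<in>A. w a * f (s' - \<tau> a))"
proof (cases "A = {}")
  case False
  define G where "G s = (\<Sum>a\<in>A. w a * f (s - \<tau> a))" for s
  define L where "L = Min (\<tau> ` A)"
  define U where "U = Max (\<tau> ` A)"
  have LU: "L \<le> \<tau> a" "\<tau> a \<le> U" if "a \<in> A" for a
    unfolding L_def U_def using assms(1) that by auto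
  have "L \<le> U" using LU False by fastforce
  have "continuous_on {L..U} G"
    unfolding G_def using continuous_on_subset[OF assms(3)]
    by (intro continuous_intros continuous_on_compose2[OF assms(3)]) auto
  then obtain s where s: "s \<in> {L..U}" "\<forall>s'\<in>{L..U}. G s \<le> G s'"
    using continuous_attains_inf[OF compact_Icc, of L U G] \<open>L \<le> U\<close> by auto
  have "G s \<le> G s'" for s'
  proof -
    define c where "c = max L (min U s')"
    have "f (c - \<tau> a) \<le> f (s' - \<tau> a)" if "a \<in> A" for a
    proof -
      consider "s' < L" "c = L" | "U < s'" "c = U" | "c = s'"
        using \<open>L \<le> U\<close> by (fastforce simp: c_def)
      thus ?thesis
      proof cases
        case 1
        thus ?thesis using antimono[of "s' - \<tau> a" "L - \<tau> a"] LU[OF that] by simp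
      next
        case 2
        thus ?thesis using mono[of "U - \<tau> a" "s' - \<tau> a"] LU[OF that] by simp
      qed simp
    qed
    hence "G c \<le> G s'"
      unfolding G_def using assms(2) by (intro sum_mono mult_left_mono) auto
    moreover have "G s \<le> G c" using s(2) \<open>L \<le> U\<close> by (auto simp: c_def)
    ultimately show ?thesis by linarith
  qed
  thus ?thesis unfolding G_def by blast
qed simp

theorem mainTheorem2:
  fixes B :: "'a::euclidean_space set" and v p :: 'a
    and A :: "'a set" and w :: "'a \<Rightarrow> real"
  assumes "gauge_body B"
    and "v \<in> skewness_directions B"
    and "finite A"
    and "\<forall>a\<in>A. w a > 0"
    and "\<forall>a\<in>A. \<exists>t::real. a = p + t *\<^sub>R v"
  shows "\<exists>t::real. \<forall>y. (\<Sum>a\<in>A. w a * minkowski_gauge B (p + t *\<^sub>R v - a))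
                     \<le> (\<Sum>a\<in>A. w a * minkowski_gauge B (y - a))"
proof -
  let ?\<gamma> = "minkowski_gauge B" and ?h = "skewed_abs (skewness B)"
  have \<sigma>: "skewness B > 0" by (rule skewness_directions_skewness_pos[OF assms(1,2)])
  obtain \<tau> where \<tau>: "\<forall>a\<in>A. a = p + \<tau> a *\<^sub>R v" using bchoice[OF assms(5)] by blast
  obtain \<phi> where \<phi>: "inner \<phi> v = 1" "\<And>x. inner \<phi> x \<le> ?\<gamma> x"
    using minkowski_gauge_supporting_functional[OF assms(1)] assms(2)
    by (auto simp: skewness_directions_def)
  have "\<forall>a\<in>A. w a \<ge> 0" using assms(4) by (simp add: less_imp_le)
  then obtain s where s: "\<forall>s'. (\<Sum>a\<in>A. w a * ?h (s - \<tau> a)) \<le> (\<Sum>a\<in>A. w a * ?h (s' - \<tau> a))"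
    using sum_translates_valley_attains_min[OF assms(3) _ continuous_on_skewed_abs
        skewed_abs_antimono_nonpos[OF \<sigma>] skewed_abs_mono_nonneg[OF \<sigma>]]
    by blast
  have on_line: "?\<gamma> (p + r *\<^sub>R v - a) = ?h (r - \<tau> a)" if "a \<in> A" for r a
  proof -
    have "p + r *\<^sub>R v - a = (r - \<tau> a) *\<^sub>R v" using \<tau> that by (simp add: algebra_simps)
    thus ?thesis by (simp add: minkowski_gauge_skewness_direction_line[OF assms(1,2)])
  qed
  have projection: "?h (inner \<phi> (y - p) - \<tau> a) \<le> ?\<gamma> (y - a)" if "a \<in> A" for y a
  proof -
    have "y - a = (y - p) - \<tau> a *\<^sub>R v" using \<tau> that by (simp add: algebra_simps)
    hence "inner \<phi> (y - a) = inner \<phi> (y - p) - \<tau> a"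
      using \<phi>(1) by (simp only: inner_diff_right inner_scaleR_right mult_1_right)
    thus ?thesis using minkowski_gauge_ge_skewed_abs[OF assms(1) \<sigma> \<phi>(2)] by metis
  qed
  show ?thesis
  proof (intro exI allI)
    fix y
    have "(\<Sum>a\<in>A. w a * ?\<gamma> (p + s *\<^sub>R v - a)) = (\<Sum>a\<in>A. w a * ?h (s - \<tau> a))"
      using on_line by simp
    also have "\<dots> \<le> (\<Sum>a\<in>A. w a * ?h (inner \<phi> (y - p) - \<tau> a))" using s by blast
    also have "\<dots> \<le> (\<Sum>a\<in>A. w a * ?\<gamma> (y - a))"
      using projection assms(4) by (intro sum_mono mult_left_mono) (auto simp: less_imp_le)
    finally show "(\<Sum>a\<in>A. w a * ?\<gamma> (p + s *\<^sub>R v - a)) \<le> (\<Sum>a\<in>A. w a * ?\<gamma> (y - a))" .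
  qed
qed

end
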